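(* The singular locus $\operatorname{Sing}(\widetilde{\mathfrak I})$ of the left ideal $\widetilde{\mathfrak I}$ of $\widetilde D_m$ generated by $\widetilde\ell_1,\dots,\widetilde\ell_m$ is contained in $S(z)=\{z\in\mathbb C^m\mid z_1\cdots z_m R(z)=0\}$.
   Context: $\widetilde D_m=\mathbb C\langle z_1,\dots,z_m,\widetilde\partial_1,\dots,\widetilde\partial_m\rangle$ is the Weyl algebra ($\widetilde\partial_k=\partial/\partial z_k$). For parameters $a_1,\dots,a_p\in\mathbb C$, $b_{j,k}\in\mathbb C$ ($1\le j\le p-1$), $b_{p,k}=1$: $\widetilde\ell_k=\prod_{i=1}^p(\tfrac1p z_k\widetilde\partial_k+b_{i,k}-1)-z_k^p\prod_{i=1}^p(\tfrac1p\sum_{j=1}^m z_j\widetilde\partial_j+a_i)$. $R(z)=\prod_{(i_1,\dots,i_m)\in\{1,\dots,p\}^m}(1-\zeta_p^{i_1}z_1-\cdots-\zeta_p^{i_m}z_m)$, $\zeta_p=e^{2\pi\sqrt{-1}/p}$. Singular locus of a left ideal $\mathfrak J$: Zariski closure of the projection to $z$-space of $\operatorname{Ch}(\mathfrak J)\setminus\{\xi=0\}$, where $\operatorname{Ch}(\mathfrak J)$ is the common zero set in $\mathbb C^{2m}$ of the principal symbols (w.r.t. order filtration) of all elements of $\mathfrak J$. *)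

theory Defs
  imports "HOL-Analysis.Analysis"
begin

text \<open>Elements of the Weyl algebra are represented in normal-ordered form
  P = sum of c(alpha,beta) z^alpha d^beta
as coefficient functions with finite support.\<close>

type_synonym 'm mi = "'m \<Rightarrow> nat"
type_synonym 'm wop = "'m mi \<times> 'm mi \<Rightarrow> complex"

definition msupp :: "('a \<Rightarrow> complex) \<Rightarrow> 'a set" where
  "msupp P = {x. P x \<noteq> 0}"

definition wop_fin :: "('a \<Rightarrow> complex) \<Rightarrow> bool" where
  "wop_fin P \<longleftrightarrow> finite (msupp P)"

text \<open>Coefficient of z^al d^be in the product (z^a d^b)(z^c d^d) (Leibniz rule).\<close>
definition weyl_coeff :: "'m::finite mi \<Rightarrow> 'm mi \<Rightarrow> 'm mi \<Rightarrow> 'm mi \<Rightarrow> 'm mi \<Rightarrow> 'm mi \<Rightarrow> complex" where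
  "weyl_coeff a b c d al be =
     (\<Sum>\<kappa>\<in>{\<kappa>::'m mi. \<forall>i. \<kappa> i \<le> b i \<and> \<kappa> i \<le> c i}.
        if (\<forall>i. al i = a i + c i - \<kappa> i \<and> be i = b i + d i - \<kappa> i)
        then (\<Prod>i\<in>UNIV. of_nat (b i choose \<kappa> i) *
                 (of_nat (fact (c i)) / of_nat (fact (c i - \<kappa> i))))
        else 0)"

definition wmult :: "'m::finite wop \<Rightarrow> 'm wop \<Rightarrow> 'm wop" where
  "wmult P Q = (\<lambda>(al, be). \<Sum>(a, b)\<in>msupp P. \<Sum>(c, d)\<in>msupp Q.
       P (a, b) * Q (c, d) * weyl_coeff a b c d al be)"

definition wadd :: "'m wop \<Rightarrow> 'm wop \<Rightarrow> 'm wop" where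
  "wadd P Q = (\<lambda>x. P x + Q x)"

definition wsmult :: "complex \<Rightarrow> 'm wop \<Rightarrow> 'm wop" where
  "wsmult s P = (\<lambda>x. s * P x)"

definition wconst :: "complex \<Rightarrow> 'm wop" where
  "wconst s = (\<lambda>(al, be). if al = (\<lambda>_. 0) \<and> be = (\<lambda>_. 0) then s else 0)"

definition wone :: "'m wop" where "wone = wconst 1"

definition wz :: "'m \<Rightarrow> 'm wop" where
  "wz k = (\<lambda>(al, be). if al = (\<lambda>i. if i = k then 1 else 0) \<and> be = (\<lambda>_. 0) then 1 else 0)"

definition wd :: "'m \<Rightarrow> 'm wop" where
  "wd k = (\<lambda>(al, be). if al = (\<lambda>_. 0) \<and> be = (\<lambda>i. if i = k then 1 else 0) then 1 else 0)"

definition wpow :: "'m::finite wop \<Rightarrow> nat \<Rightarrow> 'm wop" where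
  "wpow P n = ((wmult P) ^^ n) wone"

definition weuler :: "'m::finite wop" where
  "weuler = (\<lambda>x. \<Sum>j\<in>UNIV. wmult (wz j) (wd j) x)"

definition ell :: "nat \<Rightarrow> (nat \<Rightarrow> complex) \<Rightarrow> (nat \<Rightarrow> 'm \<Rightarrow> complex) \<Rightarrow> 'm::finite \<Rightarrow> 'm wop" where
  "ell p a b k =
     wadd (foldr (\<lambda>i acc. wmult (wadd (wsmult (1 / of_nat p) (wmult (wz k) (wd k)))
                                       (wconst (b i k - 1))) acc) [1..<p+1] wone)
          (wsmult (-1) (wmult (wpow (wz k) p)
             (foldr (\<lambda>i acc. wmult (wadd (wsmult (1 / of_nat p) weuler) (wconst (a i))) acc)
                    [1..<p+1] wone)))"

definition gen_left_ideal :: "('m::finite \<Rightarrow> 'm wop) \<Rightarrow> 'm wop set" where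
  "gen_left_ideal L = {P. \<exists>Q. (\<forall>k. wop_fin (Q k)) \<and>
       P = (\<lambda>x. \<Sum>k\<in>UNIV. wmult (Q k) (L k) x)}"

definition weyl_ord :: "'m::finite wop \<Rightarrow> nat" where
  "weyl_ord P = Max ((\<lambda>(al, be). \<Sum>i\<in>UNIV. be i) ` msupp P)"

definition wsymbol :: "'m::finite wop \<Rightarrow> complex^'m \<Rightarrow> complex^'m \<Rightarrow> complex" where
  "wsymbol P z \<xi> = (\<Sum>(al, be)\<in>{x \<in> msupp P. (\<Sum>i\<in>UNIV. snd x i) = weyl_ord P}.
       P (al, be) * (\<Prod>i\<in>UNIV. z $ i ^ al i * \<xi> $ i ^ be i))"

definition char_var :: "'m::finite wop set \<Rightarrow> ((complex^'m) \<times> (complex^'m)) set" where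
  "char_var J = {(z, \<xi>). \<forall>P\<in>J. wsymbol P z \<xi> = 0}"

definition mpoly_eval :: "('m::finite mi \<Rightarrow> complex) \<Rightarrow> complex^'m \<Rightarrow> complex" where
  "mpoly_eval c z = (\<Sum>al\<in>msupp c. c al * (\<Prod>i\<in>UNIV. z $ i ^ al i))"

definition zariski_closure :: "(complex^'m::finite) set \<Rightarrow> (complex^'m) set" where
  "zariski_closure A = {z. \<forall>c. wop_fin c \<and> (\<forall>w\<in>A. mpoly_eval c w = 0) \<longrightarrow> mpoly_eval c z = 0}"

definition sing_locus :: "'m::finite wop set \<Rightarrow> (complex^'m) set" where
  "sing_locus J = zariski_closure {z. \<exists>\<xi>. \<xi> \<noteq> 0 \<and> (z, \<xi>) \<in> char_var J}"

definition Rpoly :: "nat \<Rightarrow> complex^'m::finite \<Rightarrow> complex" where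
  "Rpoly p z = (\<Prod>ii\<in>{ii::'m \<Rightarrow> nat. \<forall>j. ii j \<in> {1..p}}.
       1 - (\<Sum>j\<in>UNIV. cis (2 * pi / real p) ^ ii j * z $ j))"

end

theory Submission
  imports Defs
begin

text \<open>
  Every operator built from \<open>z\<close>, \<open>\<partial>\<close> and constants by sums, scalar multiples and products
  has order at most the obvious bound, and its degree-\<open>n\<close> symbol is computed by
  replacing \<open>\<partial>\<^sub>k\<close> by \<open>\<xi>\<^sub>k\<close> and multiplying commutatively. Hence \<open>\<ell>\<^sub>k\<close> has order \<open>\<le> p\<close>
  with degree-\<open>p\<close> symbol \<open>p\<^sup>-\<^sup>p ((z\<^sub>k\<xi>\<^sub>k)\<^sup>p - z\<^sub>k\<^sup>p \<langle>z,\<xi>\<rangle>\<^sup>p)\<close>. If all \<open>z\<^sub>k \<noteq> 0\<close> and these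
  symbols all vanish, then \<open>\<xi>\<^sub>k\<^sup>p = s\<^sup>p\<close> with \<open>s = \<langle>z,\<xi>\<rangle>\<close>; for \<open>\<xi> \<noteq> 0\<close> this forces \<open>s \<noteq> 0\<close>
  and \<open>\<xi>\<^sub>k = \<zeta>\<^sub>p^(i\<^sub>k) s\<close>, and then \<open>s = s \<Sum>\<^sub>k \<zeta>\<^sub>p^(i\<^sub>k) z\<^sub>k\<close> makes a factor of \<open>R(z)\<close> vanish.
  So the characteristic variety off \<open>\<xi> = 0\<close> lies over the zero set of the polynomial
  \<open>z\<^sub>1\<cdots>z\<^sub>m R(z)\<close>, which is Zariski closed.
\<close>

definition order_le :: "'m::finite wop \<Rightarrow> nat \<Rightarrow> bool" where
  "order_le P n \<longleftrightarrow> wop_fin P \<and> (\<forall>x\<in>msupp P. (\<Sum>i\<in>UNIV. snd x i) \<le> n)"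

definition monom_eval :: "'m::finite mi \<times> 'm mi \<Rightarrow> complex^'m \<Rightarrow> complex^'m \<Rightarrow> complex" where
  "monom_eval x z \<xi> = (\<Prod>i\<in>UNIV. z $ i ^ fst x i * \<xi> $ i ^ snd x i)"

definition top_symbol :: "nat \<Rightarrow> 'm::finite wop \<Rightarrow> complex^'m \<Rightarrow> complex^'m \<Rightarrow> complex" where
  "top_symbol n P z \<xi> = (\<Sum>x\<in>{x\<in>msupp P. (\<Sum>i\<in>UNIV. snd x i) = n}. P x * monom_eval x z \<xi>)"

lemma finite_msupp_if_order_le: "order_le P n \<Longrightarrow> finite (msupp P)"
  by (simp add: order_le_def wop_fin_def)

lemma order_le_mono: "order_le P n \<Longrightarrow> n \<le> m \<Longrightarrow> order_le P m"
  by (auto simp: order_le_def)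

lemma top_symbol_above_order: "order_le P n \<Longrightarrow> n < m \<Longrightarrow> top_symbol m P z \<xi> = 0"
  unfolding top_symbol_def order_le_def by (auto intro!: sum.neutral)

lemma top_symbol_on_superset:
  assumes "finite S" "msupp P \<subseteq> S"
  shows "top_symbol n P z \<xi> =
           (\<Sum>x\<in>S. if (\<Sum>i\<in>UNIV. snd x i) = n then P x * monom_eval x z \<xi> else 0)"
proof -
  have "top_symbol n P z \<xi> =
          (\<Sum>x\<in>msupp P. if (\<Sum>i\<in>UNIV. snd x i) = n then P x * monom_eval x z \<xi> else 0)"
    unfolding top_symbol_def using assms by (simp add: sum.inter_filter finite_subset)
  also have "\<dots> = (\<Sum>x\<in>S. if (\<Sum>i\<in>UNIV. snd x i) = n then P x * monom_eval x z \<xi> else 0)"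
    by (rule sum.mono_neutral_left) (use assms in \<open>auto simp: msupp_def\<close>)
  finally show ?thesis .
qed

lemma wsymbol_eq_top_symbol:
  assumes "order_le P n" "top_symbol n P z \<xi> \<noteq> 0"
  shows "wsymbol P z \<xi> = top_symbol n P z \<xi>"
proof -
  have "{x\<in>msupp P. (\<Sum>i\<in>UNIV. snd x i) = n} \<noteq> {}"
    using assms(2) unfolding top_symbol_def by (metis sum.empty)
  have "weyl_ord P = n"
    unfolding weyl_ord_def
  proof (rule Max_eqI)
    show "finite ((\<lambda>(al, be). \<Sum>i\<in>UNIV. be i) ` msupp P)"
      using finite_msupp_if_order_le[OF assms(1)] by simp
    show "d \<le> n" if "d \<in> (\<lambda>(al, be). \<Sum>i\<in>UNIV. be i) ` msupp P" for d
      using that assms(1) by (auto simp: order_le_def)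
    show "n \<in> (\<lambda>(al, be). \<Sum>i\<in>UNIV. be i) ` msupp P"
      using \<open>{x\<in>msupp P. (\<Sum>i\<in>UNIV. snd x i) = n} \<noteq> {}\<close> by force
  qed
  then show ?thesis
    unfolding wsymbol_def top_symbol_def monom_eval_def by (intro sum.cong) auto
qed

subsection \<open>Symbol calculus\<close>

lemma
  assumes "order_le P n" "order_le Q n"
  shows order_le_wadd: "order_le (wadd P Q) n"
    and top_symbol_wadd: "top_symbol m (wadd P Q) z \<xi> = top_symbol m P z \<xi> + top_symbol m Q z \<xi>"
proof -
  have fin: "finite (msupp P \<union> msupp Q)"
    using assms by (simp add: finite_msupp_if_order_le)
  have sub: "msupp (wadd P Q) \<subseteq> msupp P \<union> msupp Q"
    by (auto simp: msupp_def wadd_def)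
  show "order_le (wadd P Q) n"
    using assms sub fin unfolding order_le_def wop_fin_def by (meson UnE finite_subset subsetD)
  show "top_symbol m (wadd P Q) z \<xi> = top_symbol m P z \<xi> + top_symbol m Q z \<xi>"
    using sub fin
    by (simp add: top_symbol_on_superset[OF fin] sum.distrib[symmetric] wadd_def)
       (intro sum.cong; auto simp: algebra_simps)
qed

lemma
  assumes "order_le P n"
  shows order_le_wsmult: "order_le (wsmult c P) n"
    and top_symbol_wsmult: "top_symbol m (wsmult c P) z \<xi> = c * top_symbol m P z \<xi>"
proof -
  have fin: "finite (msupp P)" using assms by (rule finite_msupp_if_order_le)
  have sub: "msupp (wsmult c P) \<subseteq> msupp P" by (auto simp: msupp_def wsmult_def)
  show "order_le (wsmult c P) n"
    using assms sub fin unfolding order_le_def wop_fin_def by (meson finite_subset subsetD)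
  show "top_symbol m (wsmult c P) z \<xi> = c * top_symbol m P z \<xi>"
    using sub by (simp add: top_symbol_on_superset[OF fin] sum_distrib_left wsmult_def)
       (intro sum.cong; auto simp: algebra_simps)
qed

lemma
  assumes "finite A" "\<forall>j\<in>A. order_le (F j) n"
  shows order_le_wsum: "order_le (\<lambda>x. \<Sum>j\<in>A. F j x) n"
    and top_symbol_wsum: "top_symbol m (\<lambda>x. \<Sum>j\<in>A. F j x) z \<xi> = (\<Sum>j\<in>A. top_symbol m (F j) z \<xi>)"
proof -
  have "order_le (\<lambda>x. \<Sum>j\<in>A. F j x) n \<and>
        top_symbol m (\<lambda>x. \<Sum>j\<in>A. F j x) z \<xi> = (\<Sum>j\<in>A. top_symbol m (F j) z \<xi>)"
    using assms
  proof (induction A rule: finite_induct)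
    case empty
    then show ?case by (simp add: order_le_def wop_fin_def msupp_def top_symbol_def)
  next
    case (insert j A)
    have eq: "(\<lambda>x. \<Sum>j\<in>insert j A. F j x) = wadd (F j) (\<lambda>x. \<Sum>j\<in>A. F j x)"
      using insert by (simp add: wadd_def)
    have "order_le (F j) n" "order_le (\<lambda>x. \<Sum>j\<in>A. F j x) n" using insert by auto
    with insert show ?case unfolding eq by (simp add: order_le_wadd top_symbol_wadd)
  qed
  then show "order_le (\<lambda>x. \<Sum>j\<in>A. F j x) n"
    and "top_symbol m (\<lambda>x. \<Sum>j\<in>A. F j x) z \<xi> = (\<Sum>j\<in>A. top_symbol m (F j) z \<xi>)"
    by auto
qed

lemma
  assumes "msupp P \<subseteq> {(al, be)}"
  shows order_le_single_monomial: "order_le P (\<Sum>i\<in>UNIV. be i)"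
    and top_symbol_single_monomial: "top_symbol (\<Sum>i\<in>UNIV. be i) P z \<xi> = P (al, be) * monom_eval (al, be) z \<xi>"
  using assms finite_subset[OF assms]
  by (auto simp: order_le_def wop_fin_def top_symbol_on_superset[OF _ assms])

lemma
  shows order_le_wconst: "order_le (wconst c) 0"
    and top_symbol_wconst: "top_symbol 0 (wconst c) z \<xi> = c"
proof -
  have "msupp (wconst c) \<subseteq> {((\<lambda>_. 0), (\<lambda>_. 0))}"
    by (auto simp: msupp_def wconst_def split: if_splits)
  from order_le_single_monomial[OF this] top_symbol_single_monomial[OF this]
  show "order_le (wconst c) 0" "top_symbol 0 (wconst c) z \<xi> = c"
    by (simp_all add: wconst_def monom_eval_def)
qed

lemma
  shows order_le_wone: "order_le wone 0"
    and top_symbol_wone: "top_symbol 0 wone z \<xi> = 1"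
  unfolding wone_def by (rule order_le_wconst top_symbol_wconst)+

lemma prod_power_indicator: "(\<Prod>i\<in>UNIV. (x $ i :: complex) ^ (if i = k then 1 else 0)) = x $ k"
  by (simp add: if_distrib prod.delta cong: if_cong)

lemma
  shows order_le_wz: "order_le (wz k) 0"
    and top_symbol_wz: "top_symbol 0 (wz k) z \<xi> = z $ k"
proof -
  have "msupp (wz k) \<subseteq> {((\<lambda>i. if i = k then 1 else 0), (\<lambda>_. 0))}"
    by (auto simp: msupp_def wz_def split: if_splits)
  from order_le_single_monomial[OF this] top_symbol_single_monomial[OF this]
  show "order_le (wz k) 0" "top_symbol 0 (wz k) z \<xi> = z $ k"
    by (simp_all add: wz_def monom_eval_def prod_power_indicator)
qed

lemma
  shows order_le_wd: "order_le (wd k) 1"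
    and top_symbol_wd: "top_symbol 1 (wd k) z \<xi> = \<xi> $ k"
proof -
  have "msupp (wd k) \<subseteq> {((\<lambda>_. 0), (\<lambda>i. if i = k then 1 else 0))}"
    by (auto simp: msupp_def wd_def split: if_splits)
  from order_le_single_monomial[OF this] top_symbol_single_monomial[OF this]
  show "order_le (wd k) 1" "top_symbol 1 (wd k) z \<xi> = \<xi> $ k"
    by (simp_all add: wd_def monom_eval_def prod_power_indicator)
qed

lemma finite_box: "finite {f :: 'm::finite \<Rightarrow> nat. \<forall>i. f i \<le> g i}"
proof -
  have "{f :: 'm \<Rightarrow> nat. \<forall>i. f i \<le> g i} = (\<Pi>\<^sub>E i\<in>UNIV. {..g i})"
    by (auto simp: PiE_def Pi_def extensional_def)
  then show ?thesis by (simp add: finite_PiE)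
qed

lemma weyl_coeff_nonzero_shape:
  assumes "weyl_coeff a b c d al be \<noteq> 0"
  obtains \<kappa> where "\<forall>i. \<kappa> i \<le> b i \<and> \<kappa> i \<le> c i"
    and "\<forall>i. al i = a i + c i - \<kappa> i \<and> be i = b i + d i - \<kappa> i"
  using sum.not_neutral_contains_not_neutral[OF assms[unfolded weyl_coeff_def]]
  by (metis (no_types, lifting) mem_Collect_eq)

text \<open>In top degree only the term without contractions (\<open>\<kappa> = 0\<close>) of the Leibniz rule survives.\<close>
lemma weyl_coeff_top_degree:
  fixes a b c d al be :: "'m::finite mi"
  assumes "(\<Sum>i\<in>UNIV. b i) + (\<Sum>i\<in>UNIV. d i) \<le> (\<Sum>i\<in>UNIV. be i)"
  shows "weyl_coeff a b c d al be =
           (if al = (\<lambda>i. a i + c i) \<and> be = (\<lambda>i. b i + d i) then 1 else 0)"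
proof -
  define K where "K = {\<kappa>::'m mi. \<forall>i. \<kappa> i \<le> b i \<and> \<kappa> i \<le> c i}"
  define T where "T = (\<lambda>\<kappa>::'m mi. if (\<forall>i. al i = a i + c i - \<kappa> i \<and> be i = b i + d i - \<kappa> i)
        then (\<Prod>i\<in>UNIV. of_nat (b i choose \<kappa> i) *
                 (of_nat (fact (c i)) / of_nat (fact (c i - \<kappa> i)))) else (0::complex))"
  have fin: "finite K" unfolding K_def by (rule finite_subset[OF _ finite_box[of b]]) auto
  have T_eq_0: "T \<kappa> = 0" if "\<kappa> \<in> K" "\<kappa> \<noteq> (\<lambda>_. 0)" for \<kappa>
  proof (rule ccontr)
    assume "T \<kappa> \<noteq> 0"
    then have "\<forall>i. be i = b i + d i - \<kappa> i" unfolding T_def by (auto split: if_splits)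
    with that(1) have "\<forall>i. be i + \<kappa> i = b i + d i" unfolding K_def by (simp add: le_add_diff_inverse2 trans_le_add1)
    then have "(\<Sum>i\<in>UNIV. be i) + (\<Sum>i\<in>UNIV. \<kappa> i) = (\<Sum>i\<in>UNIV. b i) + (\<Sum>i\<in>UNIV. d i)"
      by (simp add: sum.distrib[symmetric])
    with assms have "(\<Sum>i\<in>UNIV. \<kappa> i) = 0" by linarith
    then have "\<forall>i. \<kappa> i = 0" by simp
    with that(2) show False by auto
  qed
  have "weyl_coeff a b c d al be = sum T K" unfolding weyl_coeff_def T_def K_def by simp
  also have "\<dots> = sum T {\<lambda>_. 0}"
  proof (rule sum.mono_neutral_right[OF fin])
    show "{\<lambda>_. 0} \<subseteq> K" by (simp add: K_def)
    show "\<forall>\<kappa>\<in>K - {\<lambda>_. 0}. T \<kappa> = 0" using T_eq_0 by blast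
  qed
  also have "\<dots> = (if al = (\<lambda>i. a i + c i) \<and> be = (\<lambda>i. b i + d i) then 1 else 0)"
    unfolding T_def by (simp add: fun_eq_iff)
  finally show ?thesis .
qed

lemma wmult_eq:
  "wmult P Q x = (\<Sum>y\<in>msupp P. \<Sum>w\<in>msupp Q.
      P y * Q w * weyl_coeff (fst y) (snd y) (fst w) (snd w) (fst x) (snd x))"
  by (simp add: wmult_def case_prod_unfold)

lemma monom_eval_add:
  "monom_eval (\<lambda>i. fst y i + fst w i, \<lambda>i. snd y i + snd w i) z \<xi> = monom_eval y z \<xi> * monom_eval w z \<xi>"
  unfolding monom_eval_def by (simp add: power_add prod.distrib[symmetric] algebra_simps)

lemma msupp_wmult_shape:
  assumes "x \<in> msupp (wmult P Q)"
  obtains y w \<kappa> where "y \<in> msupp P" "w \<in> msupp Q"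
    and "\<forall>i. fst x i = fst y i + fst w i - \<kappa> i \<and> snd x i = snd y i + snd w i - \<kappa> i"
proof -
  have "wmult P Q x \<noteq> 0" using assms by (simp add: msupp_def)
  then obtain y where y: "y \<in> msupp P" and
    "(\<Sum>w\<in>msupp Q. P y * Q w * weyl_coeff (fst y) (snd y) (fst w) (snd w) (fst x) (snd x)) \<noteq> 0"
    unfolding wmult_eq by (meson sum.not_neutral_contains_not_neutral)
  then obtain w where w: "w \<in> msupp Q"
    and "P y * Q w * weyl_coeff (fst y) (snd y) (fst w) (snd w) (fst x) (snd x) \<noteq> 0"
    by (meson sum.not_neutral_contains_not_neutral)
  then have "weyl_coeff (fst y) (snd y) (fst w) (snd w) (fst x) (snd x) \<noteq> 0" by simp
  then obtain \<kappa> where "\<forall>i. fst x i = fst y i + fst w i - \<kappa> i \<and> snd x i = snd y i + snd w i - \<kappa> i"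
    by (rule weyl_coeff_nonzero_shape)
  with y w show ?thesis by (rule that)
qed

lemma wmult_top_degree_term:
  fixes y w :: "'m::finite mi \<times> 'm mi"
  assumes "finite S" "(\<lambda>i. fst y i + fst w i, \<lambda>i. snd y i + snd w i) \<in> S"
    and "(\<Sum>i\<in>UNIV. snd y i) \<le> n" "(\<Sum>i\<in>UNIV. snd w i) \<le> m"
  shows "(\<Sum>x\<in>S. if (\<Sum>i\<in>UNIV. snd x i) = n + m
            then weyl_coeff (fst y) (snd y) (fst w) (snd w) (fst x) (snd x) * monom_eval x z \<xi> else 0)
       = (if (\<Sum>i\<in>UNIV. snd y i) = n then monom_eval y z \<xi> else 0)
       * (if (\<Sum>i\<in>UNIV. snd w i) = m then monom_eval w z \<xi> else 0)"
    (is "sum ?E S = _")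
proof -
  define x0 where "x0 = (\<lambda>i. fst y i + fst w i, \<lambda>i. snd y i + snd w i)"
  have sum_x0: "(\<Sum>i\<in>UNIV. snd x0 i) = (\<Sum>i\<in>UNIV. snd y i) + (\<Sum>i\<in>UNIV. snd w i)"
    unfolding x0_def by (simp add: sum.distrib)
  have "?E x = (if x = x0 then (if (\<Sum>i\<in>UNIV. snd x0 i) = n + m then monom_eval x0 z \<xi> else 0) else 0)"
    for x
  proof (cases "(\<Sum>i\<in>UNIV. snd x i) = n + m")
    case True
    with assms(3,4) have "(\<Sum>i\<in>UNIV. snd y i) + (\<Sum>i\<in>UNIV. snd w i) \<le> (\<Sum>i\<in>UNIV. snd x i)"
      by linarith
    from weyl_coeff_top_degree[OF this, of "fst y" "fst w" "fst x"] True show ?thesis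
      unfolding x0_def by (cases x) auto
  next
    case False
    then show ?thesis by (cases "x = x0") simp_all
  qed
  then have "sum ?E S = (if (\<Sum>i\<in>UNIV. snd x0 i) = n + m then monom_eval x0 z \<xi> else 0)"
    using assms(1,2) unfolding x0_def[symmetric] by simp
  also have "\<dots> = (if (\<Sum>i\<in>UNIV. snd y i) = n then monom_eval y z \<xi> else 0)
                * (if (\<Sum>i\<in>UNIV. snd w i) = m then monom_eval w z \<xi> else 0)"
  proof -
    have "(\<Sum>i\<in>UNIV. snd x0 i) = n + m \<longleftrightarrow> (\<Sum>i\<in>UNIV. snd y i) = n \<and> (\<Sum>i\<in>UNIV. snd w i) = m"
      using assms(3,4) unfolding sum_x0 by linarith
    moreover have "monom_eval x0 z \<xi> = monom_eval y z \<xi> * monom_eval w z \<xi>"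
      unfolding x0_def by (rule monom_eval_add)
    ultimately show ?thesis by simp
  qed
  finally show ?thesis .
qed

lemma
  fixes P Q :: "'m::finite wop"
  assumes P: "order_le P n" and Q: "order_le Q m"
  shows order_le_wmult: "order_le (wmult P Q) (n + m)"
    and top_symbol_wmult: "top_symbol (n + m) (wmult P Q) z \<xi> = top_symbol n P z \<xi> * top_symbol m Q z \<xi>"
proof -
  have finP: "finite (msupp P)" and finQ: "finite (msupp Q)"
    using P Q by (simp_all add: finite_msupp_if_order_le)
  define S where "S = (\<Union>y\<in>msupp P. \<Union>w\<in>msupp Q.
     {f :: 'm mi. \<forall>i. f i \<le> fst y i + fst w i} \<times> {f :: 'm mi. \<forall>i. f i \<le> snd y i + snd w i})"
  have finS: "finite S" unfolding S_def using finP finQ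
    by (intro finite_UN_I finite_cartesian_product finite_box)
  have sub: "msupp (wmult P Q) \<subseteq> S"
  proof
    fix x assume "x \<in> msupp (wmult P Q)"
    then obtain y w \<kappa> where yw: "y \<in> msupp P" "w \<in> msupp Q"
      and "\<forall>i. fst x i = fst y i + fst w i - \<kappa> i \<and> snd x i = snd y i + snd w i - \<kappa> i"
      by (rule msupp_wmult_shape)
    then show "x \<in> S" unfolding S_def by (intro UN_I[OF yw(1)] UN_I[OF yw(2)]) (cases x, auto)
  qed
  show "order_le (wmult P Q) (n + m)"
    unfolding order_le_def wop_fin_def
  proof (intro conjI ballI)
    show "finite (msupp (wmult P Q))" by (rule finite_subset[OF sub finS])
    fix x assume "x \<in> msupp (wmult P Q)"
    then obtain y w \<kappa> where yw: "y \<in> msupp P" "w \<in> msupp Q"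
      and "\<forall>i. fst x i = fst y i + fst w i - \<kappa> i \<and> snd x i = snd y i + snd w i - \<kappa> i"
      by (rule msupp_wmult_shape)
    then have "(\<Sum>i\<in>UNIV. snd x i) \<le> (\<Sum>i\<in>UNIV. snd y i + snd w i)" by (intro sum_mono) auto
    also have "\<dots> \<le> n + m"
      using yw P Q unfolding order_le_def by (simp add: sum.distrib add_mono)
    finally show "(\<Sum>i\<in>UNIV. snd x i) \<le> n + m" .
  qed
  define E where "E = (\<lambda>y w x. if (\<Sum>i\<in>UNIV. snd x i) = n + m
    then weyl_coeff (fst y) (snd y) (fst w) (snd w) (fst x) (snd x) * monom_eval x z \<xi> else 0)"
  have inner: "(\<Sum>x\<in>S. E y w x) =
      (if (\<Sum>i\<in>UNIV. snd y i) = n then monom_eval y z \<xi> else 0) *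
      (if (\<Sum>i\<in>UNIV. snd w i) = m then monom_eval w z \<xi> else 0)"
    if "y \<in> msupp P" "w \<in> msupp Q" for y w
    unfolding E_def
    by (rule wmult_top_degree_term[OF finS]) (use that P Q in \<open>auto simp: S_def order_le_def\<close>)
  have "top_symbol (n + m) (wmult P Q) z \<xi> = (\<Sum>x\<in>S. \<Sum>y\<in>msupp P. \<Sum>w\<in>msupp Q. P y * Q w * E y w x)"
    unfolding top_symbol_on_superset[OF finS sub] wmult_eq E_def
    by (intro sum.cong refl) (auto simp: sum_distrib_left mult_ac)
  also have "\<dots> = (\<Sum>y\<in>msupp P. \<Sum>w\<in>msupp Q. \<Sum>x\<in>S. P y * Q w * E y w x)"
    by (subst sum.swap) (rule sum.cong[OF refl sum.swap])
  also have "\<dots> = (\<Sum>y\<in>msupp P. \<Sum>w\<in>msupp Q. P y * Q w * (\<Sum>x\<in>S. E y w x))"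
    by (simp add: sum_distrib_left)
  also have "\<dots> = (\<Sum>y\<in>msupp P. \<Sum>w\<in>msupp Q.
      (if (\<Sum>i\<in>UNIV. snd y i) = n then P y * monom_eval y z \<xi> else 0) *
      (if (\<Sum>i\<in>UNIV. snd w i) = m then Q w * monom_eval w z \<xi> else 0))"
    by (intro sum.cong refl) (simp add: inner)
  also have "\<dots> = top_symbol n P z \<xi> * top_symbol m Q z \<xi>"
    by (simp add: top_symbol_on_superset[OF finP order_refl]
        top_symbol_on_superset[OF finQ order_refl] sum_product)
  finally show "top_symbol (n + m) (wmult P Q) z \<xi> = top_symbol n P z \<xi> * top_symbol m Q z \<xi>" .
qed

lemma
  shows order_le_wpow_wz: "order_le (wpow (wz k) n) 0"
    and top_symbol_wpow_wz: "top_symbol 0 (wpow (wz k) n) z \<xi> = z $ k ^ n"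
proof -
  have "order_le (wpow (wz k) n) 0 \<and> top_symbol 0 (wpow (wz k) n) z \<xi> = z $ k ^ n"
  proof (induction n)
    case (Suc n)
    have "wpow (wz k) (Suc n) = wmult (wz k) (wpow (wz k) n)" by (simp add: wpow_def)
    then show ?case
      using order_le_wmult[OF order_le_wz Suc[THEN conjunct1]]
        top_symbol_wmult[OF order_le_wz Suc[THEN conjunct1]] Suc
      by (simp add: top_symbol_wz)
  qed (simp add: wpow_def order_le_wone top_symbol_wone)
  then show "order_le (wpow (wz k) n) 0" "top_symbol 0 (wpow (wz k) n) z \<xi> = z $ k ^ n"
    by auto
qed

lemma
  assumes "\<And>i. order_le (G i) 1" "\<And>i. top_symbol 1 (G i) z \<xi> = c"
  shows order_le_foldr_wmult: "order_le (foldr (\<lambda>i acc. wmult (G i) acc) xs wone) (length xs)"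
    and top_symbol_foldr_wmult:
      "top_symbol (length xs) (foldr (\<lambda>i acc. wmult (G i) acc) xs wone) z \<xi> = c ^ length xs"
proof -
  have "order_le (foldr (\<lambda>i acc. wmult (G i) acc) xs wone) (length xs) \<and>
        top_symbol (length xs) (foldr (\<lambda>i acc. wmult (G i) acc) xs wone) z \<xi> = c ^ length xs"
  proof (induction xs)
    case (Cons x xs)
    have G: "order_le (G x) 1" by (rule assms(1))
    from order_le_wmult[OF G Cons[THEN conjunct1]] top_symbol_wmult[OF G Cons[THEN conjunct1]] Cons assms(2)
    show ?case by simp
  qed (simp add: order_le_wone top_symbol_wone)
  then show "order_le (foldr (\<lambda>i acc. wmult (G i) acc) xs wone) (length xs)"
    and "top_symbol (length xs) (foldr (\<lambda>i acc. wmult (G i) acc) xs wone) z \<xi> = c ^ length xs"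
    by auto
qed

lemma
  shows order_le_wz_wd: "order_le (wmult (wz k) (wd j)) 1"
    and top_symbol_wz_wd: "top_symbol 1 (wmult (wz k) (wd j)) z \<xi> = z $ k * \<xi> $ j"
proof -
  show "order_le (wmult (wz k) (wd j)) 1"
    using order_le_wmult[OF order_le_wz order_le_wd] by simp
  have "top_symbol (0 + 1) (wmult (wz k) (wd j)) z \<xi> = z $ k * \<xi> $ j"
    by (simp only: top_symbol_wmult[OF order_le_wz order_le_wd] top_symbol_wz top_symbol_wd)
  then show "top_symbol 1 (wmult (wz k) (wd j)) z \<xi> = z $ k * \<xi> $ j" by simp
qed

lemma
  shows order_le_weuler: "order_le (weuler :: 'm::finite wop) 1"
    and top_symbol_weuler: "top_symbol 1 (weuler :: 'm wop) z \<xi> = (\<Sum>j\<in>UNIV. z $ j * \<xi> $ j)"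
proof -
  have terms: "\<forall>j\<in>UNIV. order_le (wmult (wz j) (wd j)) 1" using order_le_wz_wd by blast
  show "order_le (weuler :: 'm wop) 1"
    unfolding weuler_def by (rule order_le_wsum[OF finite_class.finite_UNIV terms])
  show "top_symbol 1 (weuler :: 'm wop) z \<xi> = (\<Sum>j\<in>UNIV. z $ j * \<xi> $ j)"
    unfolding weuler_def by (simp only: top_symbol_wsum[OF finite_class.finite_UNIV terms] top_symbol_wz_wd)
qed

lemma order_le_affine:
  "order_le P 1 \<Longrightarrow> order_le (wadd (wsmult c P) (wconst d)) 1"
  by (intro order_le_wadd order_le_wsmult order_le_mono[OF order_le_wconst]) simp_all

lemma top_symbol_affine:
  assumes "order_le P 1"
  shows "top_symbol 1 (wadd (wsmult c P) (wconst d)) z \<xi> = c * top_symbol 1 P z \<xi>"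
proof -
  have const: "order_le (wconst d) 1" by (rule order_le_mono[OF order_le_wconst]) simp
  have "top_symbol 1 (wconst d) z \<xi> = 0" by (rule top_symbol_above_order[OF order_le_wconst]) simp
  then show ?thesis
    by (simp only: top_symbol_wadd[OF order_le_wsmult[OF assms] const] top_symbol_wsmult[OF assms]) simp
qed

lemma
  fixes k :: "'m::finite"
  shows order_le_ell: "order_le (ell p a b k) p"
    and top_symbol_ell: "top_symbol p (ell p a b k) z \<xi> =
      (1 / of_nat p * (z $ k * \<xi> $ k)) ^ p
      - z $ k ^ p * (1 / of_nat p * (\<Sum>j\<in>UNIV. z $ j * \<xi> $ j)) ^ p"
proof -
  define G1 where "G1 = (\<lambda>i. wadd (wsmult (1 / of_nat p) (wmult (wz k) (wd k))) (wconst (b i k - 1)))"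
  define G2 where "G2 = (\<lambda>i. wadd (wsmult (1 / of_nat p) (weuler :: 'm wop)) (wconst (a i)))"
  define F1 where "F1 = foldr (\<lambda>i acc. wmult (G1 i) acc) [1..<p+1] wone"
  define F2 where "F2 = foldr (\<lambda>i acc. wmult (G2 i) acc) [1..<p+1] wone"
  have G1: "order_le (G1 i) 1" "top_symbol 1 (G1 i) z \<xi> = 1 / of_nat p * (z $ k * \<xi> $ k)" for i
    unfolding G1_def top_symbol_affine[OF order_le_wz_wd] top_symbol_wz_wd
    by (rule order_le_affine[OF order_le_wz_wd] refl)+
  have G2: "order_le (G2 i) 1" "top_symbol 1 (G2 i) z \<xi> = 1 / of_nat p * (\<Sum>j\<in>UNIV. z $ j * \<xi> $ j)" for i
    unfolding G2_def top_symbol_affine[OF order_le_weuler] top_symbol_weuler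
    by (rule order_le_affine[OF order_le_weuler] refl)+
  have F1: "order_le F1 p" "top_symbol p F1 z \<xi> = (1 / of_nat p * (z $ k * \<xi> $ k)) ^ p"
    using order_le_foldr_wmult[OF G1, where xs = "[1..<p+1]"] top_symbol_foldr_wmult[OF G1, where xs = "[1..<p+1]"]
    by (simp_all add: F1_def del: upt_Suc)
  have F2: "order_le F2 p" "top_symbol p F2 z \<xi> = (1 / of_nat p * (\<Sum>j\<in>UNIV. z $ j * \<xi> $ j)) ^ p"
    using order_le_foldr_wmult[OF G2, where xs = "[1..<p+1]"] top_symbol_foldr_wmult[OF G2, where xs = "[1..<p+1]"]
    by (simp_all add: F2_def del: upt_Suc)
  have M: "order_le (wmult (wpow (wz k) p) F2) p"
    "top_symbol p (wmult (wpow (wz k) p) F2) z \<xi> = z $ k ^ p * top_symbol p F2 z \<xi>"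
    using order_le_wmult[OF order_le_wpow_wz F2(1)] top_symbol_wmult[OF order_le_wpow_wz F2(1)]
    by (simp_all add: top_symbol_wpow_wz)
  have ell_eq: "ell p a b k = wadd F1 (wsmult (-1) (wmult (wpow (wz k) p) F2))"
    unfolding ell_def F1_def F2_def G1_def G2_def ..
  show "order_le (ell p a b k) p"
    unfolding ell_eq by (intro order_le_wadd order_le_wsmult M(1) F1(1))
  show "top_symbol p (ell p a b k) z \<xi> =
      (1 / of_nat p * (z $ k * \<xi> $ k)) ^ p
      - z $ k ^ p * (1 / of_nat p * (\<Sum>j\<in>UNIV. z $ j * \<xi> $ j)) ^ p"
    unfolding ell_eq
    by (simp add: top_symbol_wadd[OF F1(1) order_le_wsmult[OF M(1)]] top_symbol_wsmult[OF M(1)]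
        F1(2) F2(2) M(2))
qed

lemma wmult_zero_left: "wmult (\<lambda>_. 0) Q = (\<lambda>_. 0)"
  by (simp add: fun_eq_iff wmult_eq msupp_def)

lemma generator_in_gen_left_ideal:
  fixes L :: "'m::finite \<Rightarrow> 'm wop"
  shows "wmult wone (L k) \<in> gen_left_ideal L"
proof -
  have "wop_fin (wone :: 'm wop)" using order_le_wone unfolding order_le_def by blast
  moreover have "wop_fin (\<lambda>_::'m mi \<times> 'm mi. 0::complex)" by (simp add: wop_fin_def msupp_def)
  moreover have "(\<Sum>k'\<in>UNIV. wmult (if k' = k then wone else (\<lambda>_. 0)) (L k') x) = wmult wone (L k) x" for x
  proof -
    have "(\<Sum>k'\<in>UNIV. wmult (if k' = k then wone else (\<lambda>_. 0)) (L k') x) =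
          (\<Sum>k'\<in>UNIV. if k' = k then wmult wone (L k) x else 0)"
      by (intro sum.cong) (auto simp: wmult_zero_left)
    then show ?thesis by simp
  qed
  ultimately show ?thesis
    unfolding gen_left_ideal_def
    by (intro CollectI exI[of _ "\<lambda>k'. if k' = k then wone else (\<lambda>_. 0)"]) (auto simp: fun_eq_iff)
qed

lemma
  assumes "order_le P n"
  shows order_le_wone_wmult: "order_le (wmult wone P) n"
    and top_symbol_wone_wmult: "top_symbol n (wmult wone P) z \<xi> = top_symbol n P z \<xi>"
  using order_le_wmult[OF order_le_wone assms] top_symbol_wmult[OF order_le_wone assms, where z = z and \<xi> = \<xi>]
  by (simp_all add: top_symbol_wone)

subsection \<open>Polynomial functions and the singular locus\<close>

text \<open>Polynomial functions of \<open>z\<close> are encoded as order-0 operators: on these the Weyl product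
  is the commutative product, so closure under products is multiplicativity of the top symbol.\<close>
definition polyfun :: "(complex^'m::finite \<Rightarrow> complex) \<Rightarrow> bool" where
  "polyfun F \<longleftrightarrow> (\<exists>P::'m wop. order_le P 0 \<and> (\<forall>z \<xi>. top_symbol 0 P z \<xi> = F z))"

lemma polyfun_const: "polyfun (\<lambda>z. c)"
  unfolding polyfun_def using order_le_wconst top_symbol_wconst by blast

lemma polyfun_coordinate: "polyfun (\<lambda>z. z $ k)"
  unfolding polyfun_def using order_le_wz top_symbol_wz by blast

lemma polyfun_add: "polyfun F \<Longrightarrow> polyfun G \<Longrightarrow> polyfun (\<lambda>z. F z + G z)"
  unfolding polyfun_def using order_le_wadd top_symbol_wadd by metis

lemma polyfun_mult: "polyfun F \<Longrightarrow> polyfun G \<Longrightarrow> polyfun (\<lambda>z. F z * G z)"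
  unfolding polyfun_def using order_le_wmult top_symbol_wmult by (metis add_0)

lemma polyfun_diff: "polyfun F \<Longrightarrow> polyfun G \<Longrightarrow> polyfun (\<lambda>z. F z - G z)"
  using polyfun_add[of F "\<lambda>z. (-1) * G z"] polyfun_mult[OF polyfun_const[of "-1"], of G] by simp

lemma polyfun_sum: "finite A \<Longrightarrow> (\<forall>j\<in>A. polyfun (F j)) \<Longrightarrow> polyfun (\<lambda>z. \<Sum>j\<in>A. F j z)"
  by (induction A rule: finite_induct) (auto intro: polyfun_const polyfun_add)

lemma polyfun_prod: "finite A \<Longrightarrow> (\<forall>j\<in>A. polyfun (F j)) \<Longrightarrow> polyfun (\<lambda>z. \<Prod>j\<in>A. F j z)"
  by (induction A rule: finite_induct) (auto intro: polyfun_const polyfun_mult)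

lemma finite_index_box: "finite {ii::'m::finite \<Rightarrow> nat. \<forall>j. ii j \<in> {1..p}}"
  by (rule finite_subset[OF _ finite_box[of "\<lambda>_. p"]]) auto

lemma polyfun_Rpoly: "polyfun (Rpoly p)"
  unfolding Rpoly_def
  by (intro polyfun_prod[OF finite_index_box] polyfun_diff polyfun_const polyfun_sum
      finite_class.finite_UNIV ballI polyfun_mult polyfun_coordinate)

lemma polyfun_eq_mpoly_eval:
  fixes F :: "complex^'m::finite \<Rightarrow> complex"
  assumes "polyfun F"
  obtains c where "wop_fin c" "\<And>z. mpoly_eval c z = F z"
proof -
  obtain P :: "'m wop" where P: "order_le P 0" and F: "\<And>z \<xi>. top_symbol 0 P z \<xi> = F z"
    using assms unfolding polyfun_def by blast
  let ?c = "\<lambda>al. P (al, \<lambda>_. 0)"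
  let ?h = "\<lambda>al::'m mi. (al, (\<lambda>_::'m. 0::nat))"
  have inj: "inj ?h" by (auto simp: inj_on_def)
  have zero_fun: "(\<forall>i. be i = 0) \<longleftrightarrow> be = (\<lambda>_. 0)" for be :: "'m mi" by auto
  have im: "{x\<in>msupp P. (\<Sum>i\<in>UNIV. snd x i) = 0} = ?h ` msupp ?c"
    by (auto simp: msupp_def image_iff zero_fun)
  have "finite (?h ` msupp ?c)"
    unfolding im[symmetric] using finite_msupp_if_order_le[OF P] by simp
  then have "wop_fin ?c" unfolding wop_fin_def using finite_imageD inj inj_on_subset by blast
  moreover have "mpoly_eval ?c z = F z" for z
  proof -
    have "F z = (\<Sum>x\<in>?h ` msupp ?c. P x * monom_eval x z 0)"
      unfolding F[of z 0, symmetric] top_symbol_def im ..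
    also have "\<dots> = mpoly_eval ?c z"
      by (simp add: sum.reindex inj_on_subset[OF inj] mpoly_eval_def monom_eval_def)
    finally show ?thesis by simp
  qed
  ultimately show ?thesis using that by blast
qed

lemma sing_locus_subset_zero_set:
  fixes J :: "'m::finite wop set"
  assumes "polyfun F"
    and noncharacteristic: "\<And>z \<xi>. F z \<noteq> 0 \<Longrightarrow> \<xi> \<noteq> 0 \<Longrightarrow>
          \<exists>P\<in>J. \<exists>n. order_le P n \<and> top_symbol n P z \<xi> \<noteq> 0"
  shows "sing_locus J \<subseteq> {z. F z = 0}"
proof
  fix z assume z: "z \<in> sing_locus J"
  obtain c where c: "wop_fin c" "\<And>z. mpoly_eval c z = F z"
    using polyfun_eq_mpoly_eval[OF assms(1)] by blast
  have "F w = 0" if \<xi>: "\<xi> \<noteq> 0" and char: "(w, \<xi>) \<in> char_var J" for w \<xi>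
  proof (rule ccontr)
    assume "F w \<noteq> 0"
    then obtain P n where "P \<in> J" "order_le P n" "top_symbol n P w \<xi> \<noteq> 0"
      using noncharacteristic \<xi> by blast
    with char show False
      unfolding char_var_def by (auto simp: wsymbol_eq_top_symbol)
  qed
  with z c show "z \<in> {z. F z = 0}"
    unfolding sing_locus_def zariski_closure_def by auto
qed

lemma eq_root_of_unity_times:
  fixes w s :: complex
  assumes p: "p \<ge> 1" and "w ^ p = s ^ p" and "s \<noteq> 0"
  shows "\<exists>i\<in>{1..p}. w = cis (2 * pi / real p) ^ i * s"
proof -
  have "(w / s) ^ p = 1" using assms by (simp add: power_divide)
  then obtain j where j: "j < p" "w / s = exp (2 * of_real pi * \<i> * of_nat j / of_nat p)"
    using complex_roots_unity[OF p] by blast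
  have "cis (2 * pi / real p) ^ j = cis (real j * (2 * pi / real p))" by (simp add: Complex.DeMoivre)
  also have "\<dots> = exp (2 * of_real pi * \<i> * of_nat j / of_nat p)"
    using p by (simp add: cis_conv_exp field_simps)
  finally have w: "w = cis (2 * pi / real p) ^ j * s" using j \<open>s \<noteq> 0\<close> by (simp add: field_simps)
  show ?thesis
  proof (cases "j = 0")
    case True
    have "cis (2 * pi / real p) ^ p = 1" using p by (simp add: Complex.DeMoivre)
    with w True have "w = cis (2 * pi / real p) ^ p * s" by simp
    with p show ?thesis by (intro bexI[of _ p]) auto
  next
    case False
    with w j show ?thesis by (intro bexI[of _ j]) auto
  qed
qed

lemma power_eq_of_leading_symbol_zero:
  fixes c x y s :: complex
  assumes "(c * (x * y)) ^ p - x ^ p * (c * s) ^ p = 0" "c \<noteq> 0" "x \<noteq> 0"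
  shows "y ^ p = s ^ p"
proof -
  have "(c ^ p * x ^ p) * y ^ p = (c ^ p * x ^ p) * s ^ p"
    using assms(1) by (simp add: power_mult_distrib algebra_simps)
  moreover have "c ^ p * x ^ p \<noteq> 0" using assms(2,3) by simp
  ultimately show ?thesis by (metis mult_left_cancel)
qed

lemma ex_nonvanishing_ell_symbol:
  fixes z \<xi> :: "complex^'m::finite"
  assumes p: "p \<ge> 1" and "(\<Prod>i\<in>UNIV. z $ i) * Rpoly p z \<noteq> 0" and "\<xi> \<noteq> 0"
  shows "\<exists>k. (1 / of_nat p * (z $ k * \<xi> $ k)) ^ p
              - z $ k ^ p * (1 / of_nat p * (\<Sum>j\<in>UNIV. z $ j * \<xi> $ j)) ^ p \<noteq> 0"
proof (rule ccontr)
  define s where "s = (\<Sum>j\<in>UNIV. z $ j * \<xi> $ j)"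
  assume vanish: "\<not> ?thesis"
  have pow_eq: "\<xi> $ k ^ p = s ^ p" for k
  proof (rule power_eq_of_leading_symbol_zero)
    show "(1 / of_nat p * (z $ k * \<xi> $ k)) ^ p - z $ k ^ p * (1 / of_nat p * s) ^ p = 0"
      using vanish unfolding s_def by blast
    show "1 / of_nat p \<noteq> (0::complex)" using p by simp
    show "z $ k \<noteq> 0" using assms(2) by (simp add: prod_zero_iff)
  qed
  have "s \<noteq> 0"
  proof
    assume "s = 0"
    then have "\<xi> $ k = 0" for k using pow_eq[of k] p by (simp add: power_0_left)
    then show False using \<open>\<xi> \<noteq> 0\<close> by (simp add: vec_eq_iff)
  qed
  then obtain ii where ii: "\<And>k. ii k \<in> {1..p}" "\<And>k. \<xi> $ k = cis (2 * pi / real p) ^ ii k * s"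
    using eq_root_of_unity_times[OF p pow_eq] by metis
  have "s = (\<Sum>j\<in>UNIV. z $ j * \<xi> $ j)" by (rule s_def)
  also have "\<dots> = s * (\<Sum>j\<in>UNIV. cis (2 * pi / real p) ^ ii j * z $ j)"
    by (simp add: ii(2) sum_distrib_left mult_ac)
  finally have "s * (1 - (\<Sum>j\<in>UNIV. cis (2 * pi / real p) ^ ii j * z $ j)) = 0"
    by (simp add: right_diff_distrib)
  with \<open>s \<noteq> 0\<close> have "1 - (\<Sum>j\<in>UNIV. cis (2 * pi / real p) ^ ii j * z $ j) = 0" by simp
  with ii(1) have "Rpoly p z = 0"
    unfolding Rpoly_def by (intro prod_zero[OF finite_index_box] bexI[of _ ii]) auto
  with assms(2) show False by simp
qed

theorem mainTheorem12:
  fixes p :: nat and a :: "nat \<Rightarrow> complex" and b :: "nat \<Rightarrow> 'm::finite \<Rightarrow> complex"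
  assumes "p \<ge> 1" and "\<forall>k. b p k = 1"
  shows "sing_locus (gen_left_ideal (ell p a b))
           \<subseteq> {z :: complex^'m. (\<Prod>i\<in>UNIV. z $ i) * Rpoly p z = 0}"
proof (rule sing_locus_subset_zero_set)
  show "polyfun (\<lambda>z::complex^'m. (\<Prod>i\<in>UNIV. z $ i) * Rpoly p z)"
    by (intro polyfun_mult polyfun_prod polyfun_Rpoly polyfun_coordinate ballI finite_class.finite_UNIV)
  fix z \<xi> :: "complex^'m"
  assume "(\<Prod>i\<in>UNIV. z $ i) * Rpoly p z \<noteq> 0" "\<xi> \<noteq> 0"
  then obtain k where "top_symbol p (ell p a b k) z \<xi> \<noteq> 0"
    unfolding top_symbol_ell using ex_nonvanishing_ell_symbol[OF assms(1)] by blast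
  then show "\<exists>P\<in>gen_left_ideal (ell p a b). \<exists>n. order_le P n \<and> top_symbol n P z \<xi> \<noteq> 0"
    by (intro bexI[OF _ generator_in_gen_left_ideal[of "ell p a b" k]] exI[of _ p])
       (simp add: order_le_wone_wmult[OF order_le_ell] top_symbol_wone_wmult[OF order_le_ell])
qed

end
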